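(* Let $m\ge2$ and $z_0,\dots,z_{m-1}\in\mathbb C\setminus\{0\}$ with $z_i/z_j\notin\mathbb R$ for $i\ne j$. Then $$\Omega=\Big\{z\in\mathbb C:\sum_{j=0}^{m-1}|z\wedge z_j|\le1\Big\}$$ is a convex, centrally symmetric $2m$-gon with vertices at $\pm\tau_jz_j$, $j=0,\dots,m-1$, where $$\tau_j=\Big(\sum_{i=0,\,i\ne j}^{m-1}|z_j\wedge z_i|\Big)^{-1}.$$
   Context: For $z,w\in\mathbb C$, $|z\wedge w|$ denotes the area of the parallelogram spanned by $z$ and $w$, i.e. $|\operatorname{Im}(\bar z w)|$. *)

theory Defs
  imports "HOL-Analysis.Analysis"
begin

definition wedge_area :: "complex \<Rightarrow> complex \<Rightarrow> real" where
  "wedge_area z w = \<bar>Im (cnj z * w)\<bar>"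

end

(*
  The function N w = (\<Sum>j<m. |cross w (z j)|) is a seminorm, so \<Omega> = {N \<le> 1} is convex,
  closed and symmetric; two non-parallel z_j make it bounded, so by Krein-Milman \<Omega> is the
  convex hull of its extreme points. An extreme point w has N w = 1 and lies on one of the
  lines \<real> z_k: off these lines N is linear near w, so w is the midpoint of a segment in \<Omega>
  along the kernel of that linear part. On \<real> z_k the points with N = 1 are \<plusminus>\<tau>_k z_k, and
  such a point v is exposed by the functional w \<mapsto> \<Sum>i sgn (cross v (z i)) * cross w (z i):
  it is at most N, equals 1 at v, and equals N at w only if cross w (z k) = 0.
*)
theory Submission
  imports Defs
begin

definition cross :: "complex \<Rightarrow> complex \<Rightarrow> real" where
  "cross w u = Im (cnj w * u)"

lemma wedge_area_eq_abs_cross: "wedge_area w u = \<bar>cross w u\<bar>"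
  by (simp add: wedge_area_def cross_def)

lemma cross_eq_inner: "cross w u = w \<bullet> (- \<i> * u)"
  by (simp add: cross_def inner_complex_def algebra_simps)

lemma cross_add_left: "cross (a + b) u = cross a u + cross b u"
  by (simp add: cross_def algebra_simps)

lemma cross_minus_left [simp]: "cross (- w) u = - cross w u"
  by (simp add: cross_def)

lemma cross_of_real_mult_left [simp]: "cross (of_real c * w) u = c * cross w u"
  by (simp add: cross_def algebra_simps)

lemma cross_self [simp]: "cross u u = 0"
  by (simp add: cross_def algebra_simps)

lemma Im_divide_eq_cross: "Im (w / u) = - cross w u / (cmod u)\<^sup>2"
  by (simp add: cross_def Im_divide cmod_power2 algebra_simps)

lemma cross_eq_0_iff: "u \<noteq> 0 \<Longrightarrow> cross w u = 0 \<longleftrightarrow> w / u \<in> \<real>"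
  by (simp add: complex_is_Real_iff Im_divide_eq_cross)

lemma cross_eq_0_imp_parallel:
  assumes "u \<noteq> 0" "cross w u = 0"
  obtains c where "w = of_real c * u"
proof -
  from assms have "w / u \<in> \<real>" by (simp add: cross_eq_0_iff)
  then obtain c where "w / u = of_real c" by (elim Reals_cases)
  with assms(1) show thesis by (intro that[of c]) (simp add: field_simps)
qed

lemma cross_expansion:
  "of_real (cross u v) * w = of_real (cross w v) * u - of_real (cross w u) * v"
  by (simp add: complex_eq_iff cross_def algebra_simps)

lemma abs_add_eq_of_abs_less: "\<bar>b\<bar> < \<bar>a\<bar> \<Longrightarrow> \<bar>a + b\<bar> = \<bar>a\<bar> + sgn a * (b::real)"
  by (auto simp: abs_if sgn_if)

lemma not_extreme_point_midpoint:
  fixes w d :: "'a::real_vector"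
  assumes "w + d \<in> S" "w - d \<in> S" "d \<noteq> 0"
  shows "\<not> w extreme_point_of S"
proof -
  have "midpoint (w + d) (w - d) = w"
    by (simp add: midpoint_def algebra_simps flip: scaleR_2)
  moreover have "w + d \<noteq> w - d"
    using assms(3) by (simp add: eq_neg_iff_add_eq_0 flip: scaleR_2)
  ultimately have "w \<in> open_segment (w + d) (w - d)"
    using midpoint_in_open_segment by metis
  with assms(1,2) show ?thesis by (auto simp: extreme_point_of_def)
qed

locale wedge_family =
  fixes m :: nat and z :: "nat \<Rightarrow> complex"
begin

definition wedge_sum :: "complex \<Rightarrow> real" where
  "wedge_sum w = (\<Sum>j<m. wedge_area w (z j))"

definition wedge_ball :: "complex set" where
  "wedge_ball = {w. wedge_sum w \<le> 1}"

lemma wedge_sum_eq: "wedge_sum w = (\<Sum>j<m. \<bar>cross w (z j)\<bar>)"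
  by (simp add: wedge_sum_def wedge_area_eq_abs_cross)

lemma wedge_sum_of_real_mult: "wedge_sum (of_real c * w) = \<bar>c\<bar> * wedge_sum w"
  by (simp add: wedge_sum_eq abs_mult sum_distrib_left)

lemma wedge_sum_minus [simp]: "wedge_sum (- w) = wedge_sum w"
  by (simp add: wedge_sum_eq)

lemma wedge_sum_triangle: "wedge_sum (a + b) \<le> wedge_sum a + wedge_sum b"
  unfolding wedge_sum_eq cross_add_left sum.distrib[symmetric]
  by (rule sum_mono) (rule abs_triangle_ineq)

lemma abs_cross_le_wedge_sum: "k < m \<Longrightarrow> \<bar>cross w (z k)\<bar> \<le> wedge_sum w"
  unfolding wedge_sum_eq by (rule member_le_sum) auto

lemma wedge_sum_generator: "wedge_sum (z j) = (\<Sum>i\<in>{..<m} - {j}. wedge_area (z j) (z i))"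
proof (cases "j < m")
  case True
  then show ?thesis
    using sum.remove[of "{..<m}" j "\<lambda>i. wedge_area (z j) (z i)"]
    by (simp add: wedge_sum_def wedge_area_eq_abs_cross)
qed (simp add: wedge_sum_def)

lemma continuous_on_wedge_sum: "continuous_on S wedge_sum"
  unfolding wedge_sum_def wedge_area_def by (intro continuous_intros)

lemma convex_wedge_ball: "convex wedge_ball"
proof (rule convexI)
  fix a b :: complex and u v :: real
  assume "a \<in> wedge_ball" "b \<in> wedge_ball" "0 \<le> u" "0 \<le> v" "u + v = 1"
  then have "u * wedge_sum a + v * wedge_sum b \<le> 1"
    by (intro convex_bound_le) (auto simp: wedge_ball_def)
  moreover have "wedge_sum (u *\<^sub>R a + v *\<^sub>R b) \<le> u * wedge_sum a + v * wedge_sum b"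
    using wedge_sum_triangle[of "u *\<^sub>R a" "v *\<^sub>R b"] \<open>0 \<le> u\<close> \<open>0 \<le> v\<close>
    by (simp add: scaleR_conv_of_real wedge_sum_of_real_mult)
  ultimately show "u *\<^sub>R a + v *\<^sub>R b \<in> wedge_ball"
    by (simp add: wedge_ball_def)
qed

lemma minus_in_wedge_ball: "w \<in> wedge_ball \<Longrightarrow> - w \<in> wedge_ball"
  by (simp add: wedge_ball_def)

lemma bounded_wedge_ball:
  assumes "i < m" "j < m" "cross (z i) (z j) \<noteq> 0"
  shows "bounded wedge_ball"
proof -
  have "cmod w \<le> (cmod (z i) + cmod (z j)) / \<bar>cross (z i) (z j)\<bar>" if "w \<in> wedge_ball" for w
  proof -
    have ij: "\<bar>cross w (z i)\<bar> \<le> 1" "\<bar>cross w (z j)\<bar> \<le> 1"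
      using that abs_cross_le_wedge_sum[OF assms(1), of w]
        abs_cross_le_wedge_sum[OF assms(2), of w]
      by (auto simp: wedge_ball_def)
    have "\<bar>cross (z i) (z j)\<bar> * cmod w
        = cmod (of_real (cross w (z j)) * z i - of_real (cross w (z i)) * z j)"
      by (simp flip: cross_expansion add: norm_mult)
    also have "\<dots> \<le> \<bar>cross w (z j)\<bar> * cmod (z i) + \<bar>cross w (z i)\<bar> * cmod (z j)"
      by (rule norm_triangle_le_diff) (simp add: norm_mult)
    also have "\<dots> \<le> cmod (z i) + cmod (z j)"
      using ij by (intro add_mono mult_left_le_one_le) auto
    finally show ?thesis
      using assms(3) by (simp add: field_simps)
  qed
  then show ?thesis
    unfolding bounded_iff by blast
qed

lemma closed_wedge_ball: "closed wedge_ball"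
  unfolding wedge_ball_def
  by (intro closed_Collect_le continuous_on_wedge_sum continuous_on_const)

lemma interior_wedge_ball: "wedge_sum w < 1 \<Longrightarrow> w \<in> interior wedge_ball"
  using interior_maximal[of "{w. wedge_sum w < 1}" wedge_ball]
  by (force simp: wedge_ball_def intro: open_Collect_less continuous_on_wedge_sum continuous_on_const)

lemma wedge_sum_locally_linear:
  assumes "\<forall>k<m. cross w (z k) \<noteq> 0"
  shows "\<forall>\<^sub>F e in nhds 0. wedge_sum (w + of_real e * d)
           = wedge_sum w + e * (\<Sum>k<m. sgn (cross w (z k)) * cross d (z k))"
proof -
  have "\<forall>\<^sub>F e in nhds 0. \<bar>e * cross d (z k)\<bar> < \<bar>cross w (z k)\<bar>" if "k < m" for k
  proof (rule order_tendstoD(2))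
    show "((\<lambda>e. \<bar>e * cross d (z k)\<bar>) \<longlongrightarrow> 0) (nhds 0)"
      using filterlim_ident[of "nhds (0::real)"] by (intro tendsto_eq_intros) auto
  qed (use assms that in auto)
  then have "\<forall>\<^sub>F e in nhds 0. \<forall>k\<in>{..<m}. \<bar>e * cross d (z k)\<bar> < \<bar>cross w (z k)\<bar>"
    by (intro eventually_ball_finite) auto
  then show ?thesis
  proof (rule eventually_mono)
    fix e assume small: "\<forall>k\<in>{..<m}. \<bar>e * cross d (z k)\<bar> < \<bar>cross w (z k)\<bar>"
    have "wedge_sum (w + of_real e * d)
        = (\<Sum>k<m. \<bar>cross w (z k)\<bar> + e * (sgn (cross w (z k)) * cross d (z k)))"
      unfolding wedge_sum_eq cross_add_left cross_of_real_mult_left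
      using small by (intro sum.cong refl) (simp add: abs_add_eq_of_abs_less)
    then show "wedge_sum (w + of_real e * d)
        = wedge_sum w + e * (\<Sum>k<m. sgn (cross w (z k)) * cross d (z k))"
      by (simp add: wedge_sum_eq sum.distrib sum_distrib_left)
  qed
qed

lemma extreme_point_wedge_ball_on_generator_line:
  assumes "w extreme_point_of wedge_ball"
  shows "\<exists>k<m. cross w (z k) = 0"
proof (rule ccontr)
  assume "\<not> ?thesis"
  then have off_lines: "\<forall>k<m. cross w (z k) \<noteq> 0" by blast
  define a where "a = (\<Sum>k<m. sgn (cross w (z k)) *\<^sub>R (- \<i> * z k))"
  define d where "d = (if a = 0 then 1 else \<i> * a)"
  have "d \<noteq> 0" by (simp add: d_def)
  have "(\<Sum>k<m. sgn (cross w (z k)) * cross d (z k)) = d \<bullet> a"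
    by (simp add: a_def cross_eq_inner inner_sum_right)
  also have "\<dots> = 0"
    by (simp add: d_def inner_complex_def)
  finally have "\<forall>\<^sub>F e in nhds 0. wedge_sum (w + of_real e * d) = wedge_sum w"
    using wedge_sum_locally_linear[OF off_lines, of d] by simp
  then obtain r :: real where "r > 0"
    and flat: "\<And>e. \<bar>e\<bar> < r \<Longrightarrow> wedge_sum (w + of_real e * d) = wedge_sum w"
    by (auto simp: eventually_nhds_metric dist_real_def)
  have "w \<in> wedge_ball"
    using assms by (simp add: extreme_point_of_def)
  then have "w + of_real (r / 2) * d \<in> wedge_ball" "w - of_real (r / 2) * d \<in> wedge_ball"
    using flat[of "r / 2"] flat[of "- r / 2"] \<open>r > 0\<close> by (auto simp: wedge_ball_def)
  moreover have "of_real (r / 2) * d \<noteq> 0"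
    using \<open>r > 0\<close> \<open>d \<noteq> 0\<close> by simp
  ultimately show False
    using assms not_extreme_point_midpoint by blast
qed

lemma extreme_point_wedge_ballI:
  assumes j: "j < m" and "z j \<noteq> 0" and v: "wedge_sum v = 1" "cross v (z j) = 0"
  shows "v extreme_point_of wedge_ball"
proof -
  define s where "s k = sgn (cross v (z k))" for k
  define a where "a = (\<Sum>k<m. s k *\<^sub>R (- \<i> * z k))"
  have "a \<bullet> x = (\<Sum>k<m. s k * cross x (z k))" for x
    unfolding a_def cross_eq_inner inner_sum_left by (simp add: inner_commute)
  then have slack: "wedge_sum x - a \<bullet> x = (\<Sum>k<m. \<bar>cross x (z k)\<bar> - s k * cross x (z k))" for x
    by (simp add: wedge_sum_eq sum_subtractf)
  have slack_nonneg: "0 \<le> \<bar>cross x (z k)\<bar> - s k * cross x (z k)" for x k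
    by (simp add: s_def sgn_if abs_if)
  have "a \<bullet> v = 1"
    using slack[of v] v(1) by (simp add: s_def abs_sgn mult.commute)
  have "wedge_ball \<inter> {x. a \<bullet> x = 1} = {v}"
  proof (intro equalityI subsetI)
    fix x assume "x \<in> wedge_ball \<inter> {x. a \<bullet> x = 1}"
    then have "(\<Sum>k<m. \<bar>cross x (z k)\<bar> - s k * cross x (z k)) \<le> 0"
      using slack[of x] by (simp add: wedge_ball_def)
    then have "(\<Sum>k<m. \<bar>cross x (z k)\<bar> - s k * cross x (z k)) = 0"
      by (intro order_antisym sum_nonneg slack_nonneg)
    then have "\<bar>cross x (z j)\<bar> - s j * cross x (z j) = 0"
      using j slack_nonneg by (simp add: sum_nonneg_eq_0_iff del: diff_ge_0_iff_ge)
    then have "cross x (z j) = 0"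
      using v(2) by (simp add: s_def)
    then obtain \<alpha> where x: "x = of_real \<alpha> * z j"
      by (rule cross_eq_0_imp_parallel[OF \<open>z j \<noteq> 0\<close>])
    obtain c where c: "v = of_real c * z j"
      using v(2) by (rule cross_eq_0_imp_parallel[OF \<open>z j \<noteq> 0\<close>])
    have "\<alpha> * (a \<bullet> z j) = 1" "c * (a \<bullet> z j) = 1"
      using \<open>x \<in> _\<close> \<open>a \<bullet> v = 1\<close> by (simp_all add: x c flip: scaleR_conv_of_real)
    then have "\<alpha> = c"
      by (metis mult_cancel_right zero_neq_one mult_zero_left)
    then show "x \<in> {v}"
      by (simp add: x c)
  qed (use \<open>a \<bullet> v = 1\<close> v(1) in \<open>simp add: wedge_ball_def\<close>)
  moreover have "a \<bullet> x \<le> 1" if "x \<in> wedge_ball" for x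
  proof -
    have "0 \<le> wedge_sum x - a \<bullet> x"
      unfolding slack by (intro sum_nonneg slack_nonneg)
    with that show ?thesis by (simp add: wedge_ball_def)
  qed
  ultimately show ?thesis
    by (rule extreme_point_of_Int_supporting_hyperplane_le)
qed

lemma extreme_point_of_wedge_ball_iff:
  assumes "\<forall>k<m. z k \<noteq> 0"
  shows "w extreme_point_of wedge_ball \<longleftrightarrow> wedge_sum w = 1 \<and> (\<exists>k<m. cross w (z k) = 0)"
proof
  assume extreme: "w extreme_point_of wedge_ball"
  then have "wedge_sum w \<le> 1" "\<not> wedge_sum w < 1"
    using interior_wedge_ball extreme_point_not_in_interior[OF extreme]
    by (auto simp: extreme_point_of_def wedge_ball_def)
  with extreme_point_wedge_ball_on_generator_line[OF extreme]
  show "wedge_sum w = 1 \<and> (\<exists>k<m. cross w (z k) = 0)" by simp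
qed (use assms extreme_point_wedge_ballI in blast)

end

locale wedge_polygon = wedge_family +
  assumes two_le_m: "2 \<le> m"
    and generators_nonzero: "\<forall>j<m. z j \<noteq> 0"
    and generators_nonparallel: "\<forall>i<m. \<forall>j<m. i \<noteq> j \<longrightarrow> z i / z j \<notin> \<real>"
begin

definition vertex :: "nat \<Rightarrow> complex" where
  "vertex j = of_real (inverse (wedge_sum (z j))) * z j"

definition vertices :: "complex set" where
  "vertices = vertex ` {..<m} \<union> (\<lambda>j. - vertex j) ` {..<m}"

lemma cross_generators_nonzero: "i < m \<Longrightarrow> j < m \<Longrightarrow> i \<noteq> j \<Longrightarrow> cross (z i) (z j) \<noteq> 0"
  using generators_nonzero generators_nonparallel by (simp add: cross_eq_0_iff)

lemma wedge_sum_generator_pos: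
  assumes "j < m"
  shows "0 < wedge_sum (z j)"
proof -
  define i :: nat where "i = (if j = 0 then 1 else 0)"
  have "i < m" "j \<noteq> i"
    using two_le_m by (auto simp: i_def)
  then have "0 < \<bar>cross (z j) (z i)\<bar>"
    using cross_generators_nonzero assms by simp
  also have "\<dots> \<le> wedge_sum (z j)"
    using \<open>i < m\<close> by (rule abs_cross_le_wedge_sum)
  finally show ?thesis .
qed

lemma compact_wedge_ball: "compact wedge_ball"
  using two_le_m cross_generators_nonzero[of 0 1]
  by (intro compact_eq_bounded_closed[THEN iffD2] conjI closed_wedge_ball bounded_wedge_ball[of 0 1])
    auto

lemma unit_sphere_on_generator_line:
  assumes k: "k < m"
  shows "wedge_sum w = 1 \<and> cross w (z k) = 0 \<longleftrightarrow> w = vertex k \<or> w = - vertex k"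
proof -
  define \<tau> where "\<tau> = inverse (wedge_sum (z k))"
  have pos: "0 < wedge_sum (z k)"
    using k by (rule wedge_sum_generator_pos)
  have "wedge_sum w = 1 \<and> cross w (z k) = 0 \<longleftrightarrow> (\<exists>c. w = of_real c * z k \<and> \<bar>c\<bar> = \<tau>)"
  proof
    assume "wedge_sum w = 1 \<and> cross w (z k) = 0"
    moreover obtain c where "w = of_real c * z k"
      using generators_nonzero k calculation by (metis cross_eq_0_imp_parallel)
    ultimately show "\<exists>c. w = of_real c * z k \<and> \<bar>c\<bar> = \<tau>"
      using pos by (auto simp: \<tau>_def wedge_sum_of_real_mult field_simps)
  qed (use pos in \<open>auto simp: \<tau>_def wedge_sum_of_real_mult\<close>)
  also have "\<dots> \<longleftrightarrow> w = of_real \<tau> * z k \<or> w = of_real (- \<tau>) * z k"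
    unfolding abs_eq_iff' using pos by (auto simp: \<tau>_def simp del: of_real_minus of_real_inverse)
  finally show ?thesis
    by (simp add: vertex_def \<tau>_def)
qed

lemma extreme_points_wedge_ball: "{w. w extreme_point_of wedge_ball} = vertices"
proof -
  have "w extreme_point_of wedge_ball \<longleftrightarrow> (\<exists>k<m. w = vertex k \<or> w = - vertex k)" for w
    using extreme_point_of_wedge_ball_iff[OF generators_nonzero] unit_sphere_on_generator_line
    by blast
  then show ?thesis
    by (auto simp: vertices_def)
qed

lemma wedge_ball_eq_convex_hull_vertices: "wedge_ball = convex hull vertices"
  using Krein_Milman_Minkowski[OF compact_wedge_ball convex_wedge_ball]
  by (simp add: extreme_points_wedge_ball)

lemma vertex_parallel_imp_eq:
  assumes "i < m" "j < m" "vertex i = of_real c * vertex j"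
  shows "i = j"
proof (rule ccontr)
  assume "i \<noteq> j"
  have "wedge_sum (z i) \<noteq> 0" "z j \<noteq> 0"
    using wedge_sum_generator_pos[OF assms(1)] generators_nonzero assms(2) by auto
  with assms(3) have "z i / z j = of_real (c * wedge_sum (z i) / wedge_sum (z j))"
    by (simp add: vertex_def field_simps)
  then have "z i / z j \<in> \<real>"
    by simp
  then show False
    using generators_nonparallel assms(1,2) \<open>i \<noteq> j\<close> by auto
qed

lemma card_vertices: "card vertices = 2 * m"
proof -
  have "inj_on vertex {..<m}"
    using vertex_parallel_imp_eq[of _ _ 1] by (auto intro: inj_onI)
  moreover have "vertex j \<noteq> 0" if "j < m" for j
    using that generators_nonzero wedge_sum_generator_pos[OF that] by (simp add: vertex_def)
  then have "vertex ` {..<m} \<inter> (\<lambda>j. - vertex j) ` {..<m} = {}"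
    using vertex_parallel_imp_eq[of _ _ "-1"] by force
  ultimately show ?thesis
    unfolding vertices_def
    by (subst card_Un_disjoint) (auto simp: card_image inj_on_def)
qed

end

theorem lemma4p10:
  fixes m :: nat and z :: "nat \<Rightarrow> complex"
  assumes "m \<ge> 2"
    and "\<forall>j<m. z j \<noteq> 0"
    and "\<forall>i<m. \<forall>j<m. i \<noteq> j \<longrightarrow> z i / z j \<notin> \<real>"
  shows "let \<Omega> = {w. (\<Sum>j<m. wedge_area w (z j)) \<le> 1};
             \<tau> = (\<lambda>j. inverse (\<Sum>i\<in>{..<m} - {j}. wedge_area (z j) (z i)));
             V = (\<lambda>j. complex_of_real (\<tau> j) * z j) ` {..<m}
                 \<union> (\<lambda>j. - (complex_of_real (\<tau> j) * z j)) ` {..<m}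
         in convex \<Omega> \<and> (\<forall>w\<in>\<Omega>. - w \<in> \<Omega>)
            \<and> card V = 2 * m
            \<and> \<Omega> = convex hull V
            \<and> {v. v extreme_point_of \<Omega>} = V"
proof -
  interpret wedge_polygon m z
    using assms by unfold_locales
  have "{w. (\<Sum>j<m. wedge_area w (z j)) \<le> 1} = wedge_ball"
    by (simp add: wedge_ball_def wedge_sum_def)
  then show ?thesis
    unfolding Let_def wedge_sum_generator[symmetric] vertex_def[symmetric] vertices_def[symmetric]
    using convex_wedge_ball minus_in_wedge_ball card_vertices
      wedge_ball_eq_convex_hull_vertices extreme_points_wedge_ball
    by simp
qed

end
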